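(* For any compilation chain for partial programs and any trace relation ${\sim}\subseteq\mathit{Trace}_S\times\mathit{Trace}_T$ with existential and universal images $\tilde\tau,\tilde\sigma$, the following are equivalent: (i) $\mathit{RTP}^{\tilde\tau}$: for every source partial program $P$ and every $\pi_S\subseteq\mathit{Trace}_S$, $P\models_R\pi_S$ implies $P{\downarrow}\models_R\tilde\tau(\pi_S)$; (ii) $\mathit{RTC}^{\sim}$: for every $P$, every target context $C_T$ and every $t$, if $C_T[P{\downarrow}]\rightsquigarrow t$ then there exist a source context $C_S$ and $s\sim t$ with $C_S[P]\rightsquigarrow s$; (iii) $\mathit{RTP}^{\tilde\sigma}$: for every $P$ and every $\pi_T\subseteq\mathit{Trace}_T$, $P\models_R\tilde\sigma(\pi_T)$ implies $P{\downarrow}\models_R\pi_T$.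
   Context: A compilation chain for partial programs consists of source partial programs $P$ and source contexts $C_S$, target partial programs and target contexts $C_T$, linking operations $C[P]$ producing whole programs at each level, sets $\mathit{Trace}_S,\mathit{Trace}_T$ of traces, semantics relations $W\rightsquigarrow t$ (whole program $W$ can produce $t$), and a compiler mapping $P$ to a target partial program $P{\downarrow}$. $P\models_R\pi$ ($P$ robustly satisfies the trace property $\pi$) iff for every context $C$ at the same level and every trace $t$, $C[P]\rightsquigarrow t$ implies $t\in\pi$. The existential image of $\sim$ is $\tilde\tau(\pi)=\{t\mid\exists s.\ s\sim t\wedge s\in\pi\}$ and its universal image is $\tilde\sigma(\pi)=\{s\mid\forall t.\ s\sim t\Rightarrow t\in\pi\}$. *)

theory Defs
  imports Main
begin

text \<open>A compilation chain for partial programs is modelled by its components: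
  source/target partial programs and contexts are types, linking operations
  plug a partial program into a context, producing a whole program, and
  the semantics relate whole programs to traces (trace sets Trace_S, Trace_T
  are the types 's and 't).\<close>

definition rsat :: "('c \<Rightarrow> 'p \<Rightarrow> 'w) \<Rightarrow> ('w \<Rightarrow> 'tr \<Rightarrow> bool) \<Rightarrow> 'p \<Rightarrow> 'tr set \<Rightarrow> bool" where
  "rsat link sem P \<pi> \<longleftrightarrow> (\<forall>C t. sem (link C P) t \<longrightarrow> t \<in> \<pi>)"

definition tau_img :: "('s \<Rightarrow> 't \<Rightarrow> bool) \<Rightarrow> 's set \<Rightarrow> 't set" where
  "tau_img rel \<pi> = {t. \<exists>s. rel s t \<and> s \<in> \<pi>}"

definition sigma_img :: "('s \<Rightarrow> 't \<Rightarrow> bool) \<Rightarrow> 't set \<Rightarrow> 's set" where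
  "sigma_img rel \<pi> = {s. \<forall>t. rel s t \<longrightarrow> t \<in> \<pi>}"

definition RTP_tau where
  "RTP_tau linkS semS linkT semT cmp rel \<longleftrightarrow>
     (\<forall>P \<pi>S. rsat linkS semS P \<pi>S \<longrightarrow> rsat linkT semT (cmp P) (tau_img rel \<pi>S))"

definition RTC where
  "RTC linkS semS linkT semT cmp rel \<longleftrightarrow>
     (\<forall>P CT t. semT (linkT CT (cmp P)) t \<longrightarrow> (\<exists>CS s. rel s t \<and> semS (linkS CS P) s))"

definition RTP_sigma where
  "RTP_sigma linkS semS linkT semT cmp rel \<longleftrightarrow>
     (\<forall>P \<pi>T. rsat linkS semS P (sigma_img rel \<pi>T) \<longrightarrow> rsat linkT semT (cmp P) \<pi>T)"

end

theory Submission
  imports Defs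
begin

text \<open>A partial program robustly satisfies exactly the supersets of its set of behaviours under
  arbitrary contexts. The existential image is monotone and left adjoint to the universal image,
  so both robust-preservation criteria collapse to the inclusion of the behaviours of the
  compiled program in the existential image of the behaviours of the source program, which is
  robust trace compilation.\<close>

definition behaviours :: "('c \<Rightarrow> 'p \<Rightarrow> 'w) \<Rightarrow> ('w \<Rightarrow> 'tr \<Rightarrow> bool) \<Rightarrow> 'p \<Rightarrow> 'tr set" where
  "behaviours link sem P = {t. \<exists>C. sem (link C P) t}"

lemma rsat_iff_behaviours_subset: "rsat link sem P \<pi> \<longleftrightarrow> behaviours link sem P \<subseteq> \<pi>"
  unfolding rsat_def behaviours_def by blast

lemma tau_img_mono: "A \<subseteq> B \<Longrightarrow> tau_img rel A \<subseteq> tau_img rel B"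
  unfolding tau_img_def by blast

lemma tau_img_subset_iff_subset_sigma_img: "tau_img rel A \<subseteq> B \<longleftrightarrow> A \<subseteq> sigma_img rel B"
  unfolding tau_img_def sigma_img_def by blast

lemma RTC_iff_behaviours_subset:
  "RTC linkS semS linkT semT cmp rel \<longleftrightarrow>
     (\<forall>P. behaviours linkT semT (cmp P) \<subseteq> tau_img rel (behaviours linkS semS P))"
  unfolding RTC_def behaviours_def tau_img_def by blast

lemma RTP_tau_iff_behaviours_subset:
  "RTP_tau linkS semS linkT semT cmp rel \<longleftrightarrow>
     (\<forall>P. behaviours linkT semT (cmp P) \<subseteq> tau_img rel (behaviours linkS semS P))"
  unfolding RTP_tau_def rsat_iff_behaviours_subset
  by (meson order_refl order_trans tau_img_mono)

lemma RTP_sigma_iff_behaviours_subset: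
  "RTP_sigma linkS semS linkT semT cmp rel \<longleftrightarrow>
     (\<forall>P. behaviours linkT semT (cmp P) \<subseteq> tau_img rel (behaviours linkS semS P))"
  unfolding RTP_sigma_def rsat_iff_behaviours_subset tau_img_subset_iff_subset_sigma_img[symmetric]
  by (meson order_refl order_trans)

theorem theorem5p1:
  fixes linkS :: "'cs \<Rightarrow> 'ps \<Rightarrow> 'ws"
    and semS :: "'ws \<Rightarrow> 's \<Rightarrow> bool"
    and linkT :: "'ct \<Rightarrow> 'pt \<Rightarrow> 'wt"
    and semT :: "'wt \<Rightarrow> 't \<Rightarrow> bool"
    and cmp :: "'ps \<Rightarrow> 'pt"
    and rel :: "'s \<Rightarrow> 't \<Rightarrow> bool"
  shows "(RTP_tau linkS semS linkT semT cmp rel \<longleftrightarrow> RTC linkS semS linkT semT cmp rel)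
       \<and> (RTC linkS semS linkT semT cmp rel \<longleftrightarrow> RTP_sigma linkS semS linkT semT cmp rel)"
  unfolding RTP_tau_iff_behaviours_subset RTC_iff_behaviours_subset RTP_sigma_iff_behaviours_subset
  by simp

end
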